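(* Fix $g\ge2$ and let $F=F^{[g]}$. For every real orthogonal $g\times g$ matrix $U=(u_{jk})$ and every $X=(X_1,\dots,X_g)\in\mathcal D_F$, the tuple $UX=\left(\sum_k u_{1k}X_k,\dots,\sum_k u_{gk}X_k\right)$ lies in $\mathcal D_F$. In particular, $(\pm X_1,\dots,\pm X_g)\in\mathcal D_F$ for every choice of signs.
   Context: $F^{[g]}$ is defined recursively: $F^{[2]}=(\sigma_z,\sigma_x)$ with $\sigma_z=\begin{bmatrix}1&0\\0&-1\end{bmatrix}$, $\sigma_x=\begin{bmatrix}0&1\\1&0\end{bmatrix}$, and if $F^{[g]}=(F_1,\dots,F_g)$ then $F^{[g+1]}=(F_1\otimes\sigma_z,\dots,F_g\otimes\sigma_z,I\otimes\sigma_x)$. For a self-adjoint matrix tuple $A$, $\mathcal D_A=\bigcup_n\{X\in SM_n(\mathbb C)^g: I-\sum_i A_i\otimes X_i\succeq0\}$, where $SM_n(\mathbb C)^g$ is the set of $g$-tuples of self-adjoint $n\times n$ complex matrices. *)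

theory Defs
  imports "Jordan_Normal_Form.Matrix" "Jordan_Normal_Form.Conjugate"
begin

definition kron :: "'a::times mat \<Rightarrow> 'a mat \<Rightarrow> 'a mat" where
  "kron A B = mat (dim_row A * dim_row B) (dim_col A * dim_col B)
     (\<lambda>(i,j). A $$ (i div dim_row B, j div dim_col B) * B $$ (i mod dim_row B, j mod dim_col B))"

definition sigma_z :: "complex mat" where
  "sigma_z = mat_of_rows_list 2 [[1, 0], [0, -1]]"

definition sigma_x :: "complex mat" where
  "sigma_x = mat_of_rows_list 2 [[0, 1], [1, 0]]"

text \<open>F^[g] as a list of g matrices (each of size 2^(g-1)); only meaningful for g \<ge> 2.\<close>
fun Fg :: "nat \<Rightarrow> complex mat list" where
  "Fg (Suc (Suc 0)) = [sigma_z, sigma_x]"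
| "Fg (Suc (Suc (Suc g))) =
     map (\<lambda>A. kron A sigma_z) (Fg (Suc (Suc g))) @ [kron (1\<^sub>m (2 ^ Suc g)) sigma_x]"
| "Fg _ = []"

definition self_adjoint :: "nat \<Rightarrow> complex mat \<Rightarrow> bool" where
  "self_adjoint n M \<longleftrightarrow> M \<in> carrier_mat n n \<and> (\<forall>i<n. \<forall>j<n. M $$ (i,j) = cnj (M $$ (j,i)))"

text \<open>Positive semidefinite: Hermitian and v^* M v \<ge> 0 for all v (complex order: real and nonnegative).\<close>
definition psd :: "nat \<Rightarrow> complex mat \<Rightarrow> bool" where
  "psd N M \<longleftrightarrow> self_adjoint N M \<and>
     (\<forall>v \<in> carrier_vec N. (\<Sum>i<N. \<Sum>j<N. cnj (v $ i) * M $$ (i,j) * v $ j) \<ge> 0)"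

definition pencil :: "complex mat list \<Rightarrow> complex mat list \<Rightarrow> nat \<Rightarrow> complex mat" where
  "pencil A X N = mat N N (\<lambda>(r,c). (if r = c then 1 else 0) -
      (\<Sum>i<length A. (kron (A ! i) (X ! i)) $$ (r,c)))"

text \<open>The free spectrahedron D_A: all g-tuples (g = length A) of self-adjoint n x n
  matrices (any n \<ge> 1) with I - \<Sum> A_i \<otimes> X_i \<succeq> 0. A is assumed to be a tuple of d x d matrices.\<close>
definition free_spectrahedron :: "complex mat list \<Rightarrow> complex mat list set" where
  "free_spectrahedron A = {X. \<exists>n>0. length X = length A \<and>
      (\<forall>i<length X. self_adjoint n (X ! i)) \<and>
      psd (dim_row (A ! 0) * n) (pencil A X (dim_row (A ! 0) * n))}"

definition real_orthogonal :: "nat \<Rightarrow> real mat \<Rightarrow> bool" where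
  "real_orthogonal g U \<longleftrightarrow> U \<in> carrier_mat g g \<and> transpose_mat U * U = 1\<^sub>m g"

definition orth_act :: "real mat \<Rightarrow> complex mat list \<Rightarrow> complex mat list" where
  "orth_act U X = map (\<lambda>j. mat (dim_row (X ! 0)) (dim_col (X ! 0))
      (\<lambda>rc. \<Sum>k<length X. complex_of_real (U $$ (j,k)) * (X ! k) $$ rc)) [0..<length X]"

end

theory Submission
  imports Defs
begin

(* The matrices F_1, ..., F_g of F^[g] are Hermitian involutions that pairwise anticommute,
   and E = (sigma_z sigma_x) (x) sigma_z (x) ... (x) sigma_z is a unitary anticommuting with all
   of them. For a real unit vector v the combination F_v = sum_j v_j F_j is again a Hermitian
   involution, and conjugation by E F_v maps F_k to sum_j h_jk F_j, where H = I - 2 v v^T is the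
   reflection in the hyperplane orthogonal to v. Since reflections generate the orthogonal group,
   every orthogonal U has a unitary W with W F_k W^* = sum_j u_jk F_j. Conjugating the pencil by
   W (x) I turns I - sum_j F_j (x) X_j into I - sum_j F_j (x) (UX)_j, and a congruence preserves
   positive semidefiniteness. Sign changes are the diagonal orthogonal matrices. *)

section \<open>Adjoints and unitary matrices\<close>

definition adjoint_mat :: "complex mat \<Rightarrow> complex mat" where
  "adjoint_mat A = mat (dim_col A) (dim_row A) (\<lambda>(i,j). cnj (A $$ (j,i)))"

lemma dim_adjoint_mat[simp]:
  "dim_row (adjoint_mat A) = dim_col A" "dim_col (adjoint_mat A) = dim_row A"
  by (auto simp: adjoint_mat_def)

lemma adjoint_carrier_mat[simp]: "A \<in> carrier_mat m n \<Longrightarrow> adjoint_mat A \<in> carrier_mat n m"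
  by (auto simp: adjoint_mat_def)

lemma index_adjoint_mat[simp]:
  "i < dim_col A \<Longrightarrow> j < dim_row A \<Longrightarrow> adjoint_mat A $$ (i,j) = cnj (A $$ (j,i))"
  by (auto simp: adjoint_mat_def)

lemma adjoint_mat_mult:
  assumes "A \<in> carrier_mat m k" "B \<in> carrier_mat k n"
  shows "adjoint_mat (A * B) = adjoint_mat B * adjoint_mat A"
  by (rule eq_matI) (use assms in \<open>auto simp: scalar_prod_def cnj_sum intro!: sum.cong\<close>)

lemma adjoint_adjoint_mat[simp]: "adjoint_mat (adjoint_mat A) = A"
  by (rule eq_matI) auto

lemma adjoint_mat_one[simp]: "adjoint_mat (1\<^sub>m n) = 1\<^sub>m n"
  by (rule eq_matI) auto

lemma self_adjoint_iff: "self_adjoint n M \<longleftrightarrow> M \<in> carrier_mat n n \<and> adjoint_mat M = M"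
proof
  assume "self_adjoint n M"
  then have M: "M \<in> carrier_mat n n"
    and M_ij: "\<And>i j. i < n \<Longrightarrow> j < n \<Longrightarrow> M $$ (i,j) = cnj (M $$ (j,i))"
    unfolding self_adjoint_def by blast+
  have "adjoint_mat M = M"
  proof (rule eq_matI)
    fix i j assume "i < dim_row M" "j < dim_col M"
    then show "adjoint_mat M $$ (i,j) = M $$ (i,j)"
      using M M_ij[of i j] by simp
  qed (use M in auto)
  with M show "M \<in> carrier_mat n n \<and> adjoint_mat M = M"
    by simp
next
  assume M: "M \<in> carrier_mat n n \<and> adjoint_mat M = M"
  then have dims: "dim_row M = n" "dim_col M = n" and adj: "adjoint_mat M = M"
    by auto
  have "M $$ (i,j) = cnj (M $$ (j,i))" if "i < n" "j < n" for i j
    using index_adjoint_mat[of i M j] that unfolding dims adj by simp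
  then show "self_adjoint n M"
    using M unfolding self_adjoint_def by blast
qed

definition unitary :: "nat \<Rightarrow> complex mat \<Rightarrow> bool" where
  "unitary n W \<longleftrightarrow> W \<in> carrier_mat n n \<and> W * adjoint_mat W = 1\<^sub>m n"

lemma conjugate_by_mult:
  assumes A: "A \<in> carrier_mat n n" and B: "B \<in> carrier_mat n n" and M: "M \<in> carrier_mat n n"
  shows "(A * B) * M * adjoint_mat (A * B) = A * (B * M * adjoint_mat B) * adjoint_mat A"
proof -
  have A': "adjoint_mat A \<in> carrier_mat n n" and B': "adjoint_mat B \<in> carrier_mat n n"
    using A B by auto
  have BM: "B * M \<in> carrier_mat n n" and BMB: "B * M * adjoint_mat B \<in> carrier_mat n n"
    using B M B' by auto
  have "(A * B) * M * adjoint_mat (A * B) = A * (B * M) * (adjoint_mat B * adjoint_mat A)"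
    by (simp only: adjoint_mat_mult[OF A B] assoc_mult_mat[OF A B M])
  also have "\<dots> = A * ((B * M) * (adjoint_mat B * adjoint_mat A))"
    by (rule assoc_mult_mat[OF A BM mult_carrier_mat[OF B' A']])
  also have "(B * M) * (adjoint_mat B * adjoint_mat A) = B * M * adjoint_mat B * adjoint_mat A"
    by (rule assoc_mult_mat[OF BM B' A', symmetric])
  also have "A * \<dots> = A * (B * M * adjoint_mat B) * adjoint_mat A"
    by (rule assoc_mult_mat[OF A BMB A', symmetric])
  finally show ?thesis .
qed

lemma unitary_mult:
  assumes "unitary n V" "unitary n W"
  shows "unitary n (V * W)"
proof -
  have V: "V \<in> carrier_mat n n" and W: "W \<in> carrier_mat n n"
    using assms by (auto simp: unitary_def)
  have "V * W * adjoint_mat (V * W) = V * (W * adjoint_mat W) * adjoint_mat V"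
    using conjugate_by_mult[OF V W one_carrier_mat[of n]]
    by (simp only: right_mult_one_mat[OF V] right_mult_one_mat[OF W]
        right_mult_one_mat[OF mult_carrier_mat[OF V W]])
  also have "\<dots> = 1\<^sub>m n"
    using assms by (simp add: unitary_def right_mult_one_mat[OF V])
  finally show ?thesis
    using V W by (simp add: unitary_def)
qed

lemma conjugate_smult:
  assumes "A \<in> carrier_mat n n" "M \<in> carrier_mat n n"
  shows "A * (c \<cdot>\<^sub>m M) * adjoint_mat A = c \<cdot>\<^sub>m (A * M * adjoint_mat A)"
  using assms by (simp add: mult_smult_distrib mult_smult_assoc_mat[of _ n n _ n])

section \<open>Kronecker products\<close>

lemma sum_lessThan_mult: "(\<Sum>l<a * b. f l) = (\<Sum>x<a. \<Sum>y<b. f (x * b + y :: nat))"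
proof (induction a)
  case (Suc a)
  have "(\<Sum>l<Suc a * b. f l) = (\<Sum>l<a * b. f l) + (\<Sum>l\<in>{a * b..<a * b + b}. f l)"
    by (simp add: add.commute lessThan_atLeast0 sum.atLeastLessThan_concat)
  also have "(\<Sum>l\<in>{a * b..<a * b + b}. f l) = (\<Sum>y<b. f (a * b + y))"
    using sum.shift_bounds_nat_ivl[of f 0 "a * b" b]
    by (simp add: atLeast0LessThan add.commute)
  finally show ?case
    using Suc by simp
qed simp

lemma index_kron[simp]:
  "i < dim_row A * dim_row B \<Longrightarrow> j < dim_col A * dim_col B \<Longrightarrow>
   kron A B $$ (i,j) = A $$ (i div dim_row B, j div dim_col B) * B $$ (i mod dim_row B, j mod dim_col B)"
  by (simp add: kron_def)

lemma dim_kron[simp]: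
  "dim_row (kron A B) = dim_row A * dim_row B" "dim_col (kron A B) = dim_col A * dim_col B"
  by (auto simp: kron_def)

lemma kron_carrier_mat[simp]:
  "A \<in> carrier_mat m1 n1 \<Longrightarrow> B \<in> carrier_mat m2 n2 \<Longrightarrow> kron A B \<in> carrier_mat (m1 * m2) (n1 * n2)"
  by (auto simp: kron_def)

lemma kron_mult:
  fixes A B C D :: "'a :: comm_semiring_0 mat"
  assumes A: "A \<in> carrier_mat m1 k1" and B: "B \<in> carrier_mat m2 k2"
    and C: "C \<in> carrier_mat k1 n1" and D: "D \<in> carrier_mat k2 n2"
  shows "kron A B * kron C D = kron (A * C) (B * D)"
proof (rule eq_matI)
  fix i j assume "i < dim_row (kron (A * C) (B * D))" "j < dim_col (kron (A * C) (B * D))"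
  then have i: "i < m1 * m2" and j: "j < n1 * n2"
    using assms by auto
  then have "m2 > 0" "n2 > 0"
    by (auto intro: gr0I)
  then have div_mod: "i div m2 < m1" "j div n2 < n1" "i mod m2 < m2" "j mod n2 < n2"
    using i j by (auto simp: less_mult_imp_div_less)
  have "(kron A B * kron C D) $$ (i,j) = (\<Sum>l<k1 * k2. kron A B $$ (i,l) * kron C D $$ (l,j))"
    using i j assms by (simp add: scalar_prod_def lessThan_atLeast0 del: sum.distrib)
  also have "\<dots> = (\<Sum>x<k1. \<Sum>y<k2. kron A B $$ (i, x * k2 + y) * kron C D $$ (x * k2 + y, j))"
    by (rule sum_lessThan_mult)
  also have "\<dots> = (\<Sum>x<k1. \<Sum>y<k2. (A $$ (i div m2, x) * C $$ (x, j div n2)) *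
                                      (B $$ (i mod m2, y) * D $$ (y, j mod n2)))"
  proof (intro sum.cong refl)
    fix x y assume xy: "x \<in> {..<k1}" "y \<in> {..<k2}"
    then have "x * k2 + y < Suc x * k2"
      by simp
    also have "\<dots> \<le> k1 * k2"
      using xy by (intro mult_le_mono1) simp
    finally have "x * k2 + y < k1 * k2" .
    then show "kron A B $$ (i, x * k2 + y) * kron C D $$ (x * k2 + y, j) =
               (A $$ (i div m2, x) * C $$ (x, j div n2)) * (B $$ (i mod m2, y) * D $$ (y, j mod n2))"
      using assms i j xy by (simp add: ac_simps)
  qed
  also have "\<dots> = kron (A * C) (B * D) $$ (i,j)"
    using assms i j div_mod
    by (simp add: scalar_prod_def lessThan_atLeast0 sum_product del: sum.distrib)
  finally show "(kron A B * kron C D) $$ (i,j) = kron (A * C) (B * D) $$ (i,j)" .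
qed (use assms in auto)

lemma adjoint_mat_kron:
  assumes "A \<in> carrier_mat m1 n1" "B \<in> carrier_mat m2 n2"
  shows "adjoint_mat (kron A B) = kron (adjoint_mat A) (adjoint_mat B)"
proof (rule eq_matI)
  fix i j assume "i < dim_row (kron (adjoint_mat A) (adjoint_mat B))"
    "j < dim_col (kron (adjoint_mat A) (adjoint_mat B))"
  then have i: "i < n1 * n2" and j: "j < m1 * m2"
    using assms by auto
  then have "m2 > 0" "n2 > 0"
    by (auto intro: gr0I)
  then show "adjoint_mat (kron A B) $$ (i,j) = kron (adjoint_mat A) (adjoint_mat B) $$ (i,j)"
    using assms i j by (simp add: less_mult_imp_div_less)
qed (use assms in auto)

lemma kron_one: "kron (1\<^sub>m m) (1\<^sub>m n) = (1\<^sub>m (m * n) :: 'a :: semiring_1 mat)"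
proof (rule eq_matI)
  fix i j assume "i < dim_row (1\<^sub>m (m * n) :: 'a mat)" "j < dim_col (1\<^sub>m (m * n) :: 'a mat)"
  then have i: "i < m * n" and j: "j < m * n"
    by auto
  then have "n > 0"
    by (auto intro: gr0I)
  moreover have "(i div n = j div n \<and> i mod n = j mod n) \<longleftrightarrow> i = j"
    by (metis div_mult_mod_eq)
  ultimately show "kron (1\<^sub>m m) (1\<^sub>m n) $$ (i,j) = (1\<^sub>m (m * n) :: 'a mat) $$ (i,j)"
    using i j by (auto simp: less_mult_imp_div_less)
qed auto

lemma kron_uminus_left: "kron (- A) B = - kron A (B :: 'a :: ring mat)"
  by (rule eq_matI) (auto simp: less_mult_imp_div_less mult.commute)

lemma kron_uminus_right: "kron A (- B) = - kron A (B :: 'a :: ring mat)"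
proof (rule eq_matI)
  fix i j assume ij: "i < dim_row (- kron A B)" "j < dim_col (- kron A B)"
  then have "dim_row B > 0" "dim_col B > 0"
    by (auto intro: gr0I)
  then show "kron A (- B) $$ (i,j) = (- kron A B) $$ (i,j)"
    using ij by simp
qed auto

lemma unitary_kron:
  assumes "unitary m A" "unitary n B"
  shows "unitary (m * n) (kron A B)"
proof -
  have A: "A \<in> carrier_mat m m" and B: "B \<in> carrier_mat n n"
    using assms by (auto simp: unitary_def)
  have "kron A B * adjoint_mat (kron A B) = kron (A * adjoint_mat A) (B * adjoint_mat B)"
    using A B by (simp add: adjoint_mat_kron[OF A B] kron_mult[of _ m m _ n n _ m _ n])
  then show ?thesis
    using assms A B by (simp add: unitary_def kron_one)
qed

lemma kron_anticommute_left:
  fixes A B C D :: "'a :: comm_ring mat"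
  assumes "A \<in> carrier_mat m m" "B \<in> carrier_mat m m" "C \<in> carrier_mat n n" "D \<in> carrier_mat n n"
    and "A * B = - (B * A)" "C * D = D * C"
  shows "kron A C * kron B D = - (kron B D * kron A C)"
  using assms by (simp add: kron_mult[of _ m m _ n n _ m _ n] kron_uminus_left)

lemma kron_anticommute_right:
  fixes A B C D :: "'a :: comm_ring mat"
  assumes "A \<in> carrier_mat m m" "B \<in> carrier_mat m m" "C \<in> carrier_mat n n" "D \<in> carrier_mat n n"
    and "A * B = B * A" "C * D = - (D * C)"
  shows "kron A C * kron B D = - (kron B D * kron A C)"
  using assms by (simp add: kron_mult[of _ m m _ n n _ m _ n] kron_uminus_right)

section \<open>Linear combinations of matrices\<close>

definition mat_sum :: "nat \<Rightarrow> ('b \<Rightarrow> 'a :: comm_monoid_add mat) \<Rightarrow> 'b set \<Rightarrow> 'a mat" where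
  "mat_sum n f S = mat n n (\<lambda>ij. \<Sum>s\<in>S. f s $$ ij)"

lemma index_mat_sum[simp]: "i < n \<Longrightarrow> j < n \<Longrightarrow> mat_sum n f S $$ (i,j) = (\<Sum>s\<in>S. f s $$ (i,j))"
  by (simp add: mat_sum_def)

lemma mat_sum_carrier[simp]:
  "mat_sum n f S \<in> carrier_mat n n" "dim_row (mat_sum n f S) = n" "dim_col (mat_sum n f S) = n"
  by (auto simp: mat_sum_def)

lemma mat_sum_cong: "(\<And>s. s \<in> S \<Longrightarrow> f s = g s) \<Longrightarrow> mat_sum n f S = mat_sum n g S"
  unfolding mat_sum_def by (metis (no_types, lifting) sum.cong)

lemma mult_mat_sum:
  fixes A :: "'a :: semiring_0 mat"
  assumes A: "A \<in> carrier_mat n n" and f: "\<And>s. s \<in> S \<Longrightarrow> f s \<in> carrier_mat n n"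
  shows "A * mat_sum n f S = mat_sum n (\<lambda>s. A * f s) S"
proof (rule eq_matI)
  fix i j assume ij: "i < dim_row (mat_sum n (\<lambda>s. A * f s) S)" "j < dim_col (mat_sum n (\<lambda>s. A * f s) S)"
  have "(A * mat_sum n f S) $$ (i,j) = (\<Sum>x<n. A $$ (i,x) * (\<Sum>s\<in>S. f s $$ (x,j)))"
    using ij A by (simp add: scalar_prod_def lessThan_atLeast0 del: sum.distrib)
  also have "\<dots> = (\<Sum>s\<in>S. \<Sum>x<n. A $$ (i,x) * f s $$ (x,j))"
    unfolding sum_distrib_left by (rule sum.swap)
  also have "\<dots> = (\<Sum>s\<in>S. (A * f s) $$ (i,j))"
  proof (rule sum.cong[OF refl])
    fix s assume "s \<in> S"
    with f have "f s \<in> carrier_mat n n"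
      by blast
    then show "(\<Sum>x<n. A $$ (i,x) * f s $$ (x,j)) = (A * f s) $$ (i,j)"
      using ij A by (simp add: scalar_prod_def lessThan_atLeast0)
  qed
  also have "\<dots> = mat_sum n (\<lambda>s. A * f s) S $$ (i,j)"
    using ij by simp
  finally show "(A * mat_sum n f S) $$ (i,j) = mat_sum n (\<lambda>s. A * f s) S $$ (i,j)" .
qed (use A in auto)

lemma mat_sum_mult:
  fixes A :: "'a :: semiring_0 mat"
  assumes A: "A \<in> carrier_mat n n" and f: "\<And>s. s \<in> S \<Longrightarrow> f s \<in> carrier_mat n n"
  shows "mat_sum n f S * A = mat_sum n (\<lambda>s. f s * A) S"
proof (rule eq_matI)
  fix i j assume ij: "i < dim_row (mat_sum n (\<lambda>s. f s * A) S)" "j < dim_col (mat_sum n (\<lambda>s. f s * A) S)"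
  have "(mat_sum n f S * A) $$ (i,j) = (\<Sum>x<n. (\<Sum>s\<in>S. f s $$ (i,x)) * A $$ (x,j))"
    using ij A by (simp add: scalar_prod_def lessThan_atLeast0 del: sum.distrib)
  also have "\<dots> = (\<Sum>s\<in>S. \<Sum>x<n. f s $$ (i,x) * A $$ (x,j))"
    unfolding sum_distrib_right by (rule sum.swap)
  also have "\<dots> = (\<Sum>s\<in>S. (f s * A) $$ (i,j))"
  proof (rule sum.cong[OF refl])
    fix s assume "s \<in> S"
    with f have "f s \<in> carrier_mat n n"
      by blast
    then show "(\<Sum>x<n. f s $$ (i,x) * A $$ (x,j)) = (f s * A) $$ (i,j)"
      using ij A by (simp add: scalar_prod_def lessThan_atLeast0)
  qed
  also have "\<dots> = mat_sum n (\<lambda>s. f s * A) S $$ (i,j)"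
    using ij by simp
  finally show "(mat_sum n f S * A) $$ (i,j) = mat_sum n (\<lambda>s. f s * A) S $$ (i,j)" .
qed (use A in auto)

lemma conjugate_mat_sum:
  assumes A: "A \<in> carrier_mat n n" and f: "\<And>s. s \<in> S \<Longrightarrow> f s \<in> carrier_mat n n"
  shows "A * mat_sum n f S * adjoint_mat A = mat_sum n (\<lambda>s. A * f s * adjoint_mat A) S"
  using A f by (simp add: mult_mat_sum mat_sum_mult)

definition lincomb :: "nat \<Rightarrow> complex mat list \<Rightarrow> (nat \<Rightarrow> real) \<Rightarrow> complex mat" where
  "lincomb d F c = mat_sum d (\<lambda>j. complex_of_real (c j) \<cdot>\<^sub>m F ! j) {..<length F}"

lemma lincomb_carrier[simp]:
  "lincomb d F c \<in> carrier_mat d d" "dim_row (lincomb d F c) = d" "dim_col (lincomb d F c) = d"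
  by (auto simp: lincomb_def)

lemma index_lincomb:
  assumes F: "set F \<subseteq> carrier_mat d d" and rs: "r < d" "s < d"
  shows "lincomb d F c $$ (r,s) = (\<Sum>j<length F. complex_of_real (c j) * F ! j $$ (r,s))"
proof -
  have "dim_row (F ! j) = d" "dim_col (F ! j) = d" if "j < length F" for j
    using F nth_mem[OF that] by auto
  then show ?thesis
    using rs by (auto simp: lincomb_def intro!: sum.cong)
qed

lemma lincomb_cong: "(\<And>j. j < length F \<Longrightarrow> c j = c' j) \<Longrightarrow> lincomb d F c = lincomb d F c'"
  unfolding lincomb_def by (rule mat_sum_cong) simp

lemma lincomb_unit_vector:
  assumes F: "set F \<subseteq> carrier_mat d d" and k: "k < length F"
  shows "lincomb d F (\<lambda>j. if j = k then 1 else 0) = F ! k"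
proof -
  have Fk: "F ! k \<in> carrier_mat d d"
    using F nth_mem[OF k] by blast
  show ?thesis
  proof (rule eq_matI)
    fix r s assume "r < dim_row (F ! k)" "s < dim_col (F ! k)"
    then have rs: "r < d" "s < d"
      using Fk by auto
    have "(\<Sum>j<length F. complex_of_real (if j = k then 1 else 0) * F ! j $$ (r,s)) =
          (\<Sum>j<length F. if j = k then F ! k $$ (r,s) else 0)"
      by (rule sum.cong) auto
    then show "lincomb d F (\<lambda>j. if j = k then 1 else 0) $$ (r,s) = F ! k $$ (r,s)"
      using k by (simp add: index_lincomb[OF F rs])
  qed (use Fk in auto)
qed

lemma adjoint_lincomb:
  assumes F: "\<forall>A\<in>set F. A \<in> carrier_mat d d \<and> adjoint_mat A = A"
  shows "adjoint_mat (lincomb d F c) = lincomb d F c"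
proof (rule eq_matI)
  fix r s assume "r < dim_row (lincomb d F c)" "s < dim_col (lincomb d F c)"
  then have rs: "r < d" "s < d"
    by auto
  have F_carrier: "set F \<subseteq> carrier_mat d d"
    using F by auto
  have hermitian: "cnj (F ! j $$ (s,r)) = F ! j $$ (r,s)" if "j < length F" for j
  proof -
    have "F ! j \<in> carrier_mat d d" "adjoint_mat (F ! j) = F ! j"
      using F nth_mem[OF that] by auto
    then show ?thesis
      using index_adjoint_mat[of r "F ! j" s] rs by simp
  qed
  have "adjoint_mat (lincomb d F c) $$ (r,s) = (\<Sum>j<length F. complex_of_real (c j) * cnj (F ! j $$ (s,r)))"
    using rs by (simp add: index_lincomb[OF F_carrier])
  also have "\<dots> = (\<Sum>j<length F. complex_of_real (c j) * F ! j $$ (r,s))"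
    by (rule sum.cong) (simp_all add: hermitian)
  also have "\<dots> = lincomb d F c $$ (r,s)"
    using rs by (simp add: index_lincomb[OF F_carrier])
  finally show "adjoint_mat (lincomb d F c) $$ (r,s) = lincomb d F c $$ (r,s)" .
qed auto

lemma index_lincomb_mult:
  assumes F: "set F \<subseteq> carrier_mat d d" and rs: "r < d" "s < d"
  shows "(lincomb d F a * lincomb d F b) $$ (r,s) =
    (\<Sum>j<length F. \<Sum>l<length F. complex_of_real (a j * b l) * (F ! j * F ! l) $$ (r,s))"
proof -
  let ?g = "length F"
  have Fj: "dim_row (F ! j) = d" "dim_col (F ! j) = d" if "j < ?g" for j
    using F nth_mem[OF that] by auto
  have "(lincomb d F a * lincomb d F b) $$ (r,s) = (\<Sum>x<d. lincomb d F a $$ (r,x) * lincomb d F b $$ (x,s))"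
    using rs by (simp add: scalar_prod_def lessThan_atLeast0 del: sum.distrib)
  also have "\<dots> = (\<Sum>x<d. \<Sum>j<?g. \<Sum>l<?g. complex_of_real (a j * b l) * (F ! j $$ (r,x) * F ! l $$ (x,s)))"
    by (intro sum.cong refl) (simp add: index_lincomb[OF F] rs sum_product ac_simps)
  also have "\<dots> = (\<Sum>j<?g. \<Sum>x<d. \<Sum>l<?g. complex_of_real (a j * b l) * (F ! j $$ (r,x) * F ! l $$ (x,s)))"
    by (rule sum.swap)
  also have "\<dots> = (\<Sum>j<?g. \<Sum>l<?g. \<Sum>x<d. complex_of_real (a j * b l) * (F ! j $$ (r,x) * F ! l $$ (x,s)))"
    by (rule sum.cong[OF refl], rule sum.swap)
  also have "\<dots> = (\<Sum>j<?g. \<Sum>l<?g. complex_of_real (a j * b l) * (F ! j * F ! l) $$ (r,s))"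
    by (intro sum.cong refl) (simp add: Fj rs scalar_prod_def lessThan_atLeast0 sum_distrib_left)
  finally show ?thesis .
qed

section \<open>Clifford systems\<close>

definition clifford_generator :: "nat \<Rightarrow> complex mat \<Rightarrow> complex mat \<Rightarrow> bool" where
  "clifford_generator d E A \<longleftrightarrow>
     A \<in> carrier_mat d d \<and> adjoint_mat A = A \<and> A * A = 1\<^sub>m d \<and> E * A = - (A * E)"

definition clifford_system :: "nat \<Rightarrow> complex mat list \<Rightarrow> complex mat \<Rightarrow> bool" where
  "clifford_system d F E \<longleftrightarrow> unitary d E \<and> (\<forall>A\<in>set F. clifford_generator d E A) \<and>
     (\<forall>j<length F. \<forall>k<length F. j \<noteq> k \<longrightarrow> F ! j * F ! k = - (F ! k * F ! j))"

lemma clifford_systemD: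
  assumes "clifford_system d F E"
  shows "unitary d E" "set F \<subseteq> carrier_mat d d"
    "\<And>A. A \<in> set F \<Longrightarrow> adjoint_mat A = A"
    "\<And>A. A \<in> set F \<Longrightarrow> A * A = 1\<^sub>m d"
    "\<And>A. A \<in> set F \<Longrightarrow> E * A = - (A * E)"
    "\<And>j k. j < length F \<Longrightarrow> k < length F \<Longrightarrow> j \<noteq> k \<Longrightarrow> F ! j * F ! k = - (F ! k * F ! j)"
  using assms unfolding clifford_system_def clifford_generator_def by blast+

lemma clifford_anticommutator_index:
  assumes C: "clifford_system d F E" and jl: "j < length F" "l < length F" and rs: "r < d" "s < d"
  shows "(F ! j * F ! l) $$ (r,s) + (F ! l * F ! j) $$ (r,s) =
    (if j = l then 2 * (if r = s then 1 else 0) else 0)"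
proof (cases "j = l")
  case True
  then show ?thesis
    using clifford_systemD(4)[OF C nth_mem[OF jl(1)]] rs by simp
next
  case False
  have "F ! l * F ! j \<in> carrier_mat d d"
    using clifford_systemD(2)[OF C] nth_mem[OF jl(1)] nth_mem[OF jl(2)] by (meson mult_carrier_mat subsetD)
  from carrier_matD[OF this] show ?thesis
    using clifford_systemD(6)[OF C jl False] False rs by simp
qed

lemma lincomb_anticommutator:
  assumes C: "clifford_system d F E"
  shows "lincomb d F a * lincomb d F b + lincomb d F b * lincomb d F a =
    complex_of_real (2 * (\<Sum>j<length F. a j * b j)) \<cdot>\<^sub>m 1\<^sub>m d"
proof (rule eq_matI)
  let ?g = "length F"
  have F: "set F \<subseteq> carrier_mat d d"
    using clifford_systemD(2)[OF C] .
  fix r s assume "r < dim_row (complex_of_real (2 * (\<Sum>j<?g. a j * b j)) \<cdot>\<^sub>m (1\<^sub>m d :: complex mat))"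
    "s < dim_col (complex_of_real (2 * (\<Sum>j<?g. a j * b j)) \<cdot>\<^sub>m (1\<^sub>m d :: complex mat))"
  then have rs: "r < d" "s < d"
    by auto
  have "(lincomb d F a * lincomb d F b + lincomb d F b * lincomb d F a) $$ (r,s) =
      (\<Sum>j<?g. \<Sum>l<?g. complex_of_real (a j * b l) * (F ! j * F ! l) $$ (r,s)) +
      (\<Sum>j<?g. \<Sum>l<?g. complex_of_real (b j * a l) * (F ! j * F ! l) $$ (r,s))"
    using rs by (simp add: index_lincomb_mult[OF F] del: index_mult_mat(1))
  also have "(\<Sum>j<?g. \<Sum>l<?g. complex_of_real (b j * a l) * (F ! j * F ! l) $$ (r,s)) =
      (\<Sum>j<?g. \<Sum>l<?g. complex_of_real (a j * b l) * (F ! l * F ! j) $$ (r,s))"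
    by (subst sum.swap) (simp add: ac_simps)
  also have "(\<Sum>j<?g. \<Sum>l<?g. complex_of_real (a j * b l) * (F ! j * F ! l) $$ (r,s)) + \<dots> =
      (\<Sum>j<?g. \<Sum>l<?g. complex_of_real (a j * b l) * ((F ! j * F ! l) $$ (r,s) + (F ! l * F ! j) $$ (r,s)))"
    by (simp add: sum.distrib distrib_left)
  also have "\<dots> = (\<Sum>j<?g. complex_of_real (a j * b j) * (2 * (if r = s then 1 else 0)))"
  proof (rule sum.cong[OF refl])
    fix j assume j: "j \<in> {..<?g}"
    have "(\<Sum>l<?g. complex_of_real (a j * b l) * ((F ! j * F ! l) $$ (r,s) + (F ! l * F ! j) $$ (r,s))) =
        (\<Sum>l<?g. if l = j then complex_of_real (a j * b j) * (2 * (if r = s then 1 else 0)) else 0)"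
      by (rule sum.cong) (use j in \<open>auto simp: clifford_anticommutator_index[OF C _ _ rs]\<close>)
    then show "(\<Sum>l<?g. complex_of_real (a j * b l) * ((F ! j * F ! l) $$ (r,s) + (F ! l * F ! j) $$ (r,s))) =
        complex_of_real (a j * b j) * (2 * (if r = s then 1 else 0))"
      using j by simp
  qed
  also have "\<dots> = (complex_of_real (2 * (\<Sum>j<?g. a j * b j)) \<cdot>\<^sub>m 1\<^sub>m d) $$ (r,s)"
    using rs by (cases "r = s") (simp_all add: sum_distrib_left sum_distrib_right ac_simps)
  finally show "(lincomb d F a * lincomb d F b + lincomb d F b * lincomb d F a) $$ (r,s) =
      (complex_of_real (2 * (\<Sum>j<?g. a j * b j)) \<cdot>\<^sub>m 1\<^sub>m d) $$ (r,s)" .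
qed auto

lemma pauli_carrier[simp]:
  "sigma_z \<in> carrier_mat 2 2" "dim_row sigma_z = 2" "dim_col sigma_z = 2"
  "sigma_x \<in> carrier_mat 2 2" "dim_row sigma_x = 2" "dim_col sigma_x = 2"
  by (auto simp: sigma_z_def sigma_x_def mat_of_rows_list_def)

lemma sigma_z_sq: "sigma_z * sigma_z = 1\<^sub>m 2"
  and sigma_x_sq: "sigma_x * sigma_x = 1\<^sub>m 2"
  and sigma_x_sigma_z: "sigma_x * sigma_z = - (sigma_z * sigma_x)"
  and adjoint_sigma_z: "adjoint_mat sigma_z = sigma_z"
  and adjoint_sigma_x: "adjoint_mat sigma_x = sigma_x"
  by (auto simp: sigma_z_def sigma_x_def mat_of_rows_list_def scalar_prod_def numeral_2_eq_2 less_Suc_eq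
      intro!: eq_matI)

lemma clifford_system_pauli: "clifford_system 2 [sigma_z, sigma_x] (sigma_z * sigma_x)"
proof -
  have "(sigma_z * sigma_x) * sigma_z = - (sigma_z * (sigma_z * sigma_x))"
    "(sigma_z * sigma_x) * sigma_x = - (sigma_x * (sigma_z * sigma_x))"
    "unitary 2 (sigma_z * sigma_x)"
    by (auto simp: unitary_def sigma_z_def sigma_x_def mat_of_rows_list_def scalar_prod_def
        numeral_2_eq_2 less_Suc_eq intro!: eq_matI)
  then show ?thesis
    by (auto simp: clifford_system_def clifford_generator_def sigma_z_sq sigma_x_sq sigma_x_sigma_z
        adjoint_sigma_z adjoint_sigma_x numeral_2_eq_2 less_Suc_eq)
qed

lemma clifford_generator_kron_sigma_z:
  assumes E: "E \<in> carrier_mat d d" and A: "clifford_generator d E A"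
  shows "clifford_generator (d * 2) (kron E sigma_z) (kron A sigma_z)"
proof -
  have Ac: "A \<in> carrier_mat d d"
    using A by (simp add: clifford_generator_def)
  have "kron E sigma_z * kron A sigma_z = - (kron A sigma_z * kron E sigma_z)"
    by (rule kron_anticommute_left[OF E Ac, where n = 2]) (use A in \<open>simp_all add: clifford_generator_def\<close>)
  then show ?thesis
    using A by (simp add: clifford_generator_def adjoint_mat_kron[OF Ac pauli_carrier(1)] adjoint_sigma_z
        kron_mult[of _ d d _ 2 2 _ d _ 2] sigma_z_sq kron_one)
qed

lemma clifford_generator_kron_sigma_x:
  assumes E: "E \<in> carrier_mat d d"
  shows "clifford_generator (d * 2) (kron E sigma_z) (kron (1\<^sub>m d) sigma_x)"
proof -
  have I: "1\<^sub>m d \<in> carrier_mat d d"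
    by simp
  have "kron E sigma_z * kron (1\<^sub>m d) sigma_x = - (kron (1\<^sub>m d) sigma_x * kron E sigma_z)"
    by (rule kron_anticommute_right[OF E I, where n = 2]) (use E in \<open>simp_all add: sigma_x_sigma_z\<close>)
  then show ?thesis
    by (simp add: clifford_generator_def adjoint_mat_kron[OF I pauli_carrier(4)] adjoint_sigma_x
        kron_mult[of _ d d _ 2 2 _ d _ 2] sigma_x_sq kron_one)
qed

lemma clifford_system_extend:
  assumes C: "clifford_system d F E"
  shows "clifford_system (d * 2) (map (\<lambda>A. kron A sigma_z) F @ [kron (1\<^sub>m d) sigma_x]) (kron E sigma_z)"
proof -
  let ?G = "map (\<lambda>A. kron A sigma_z) F @ [kron (1\<^sub>m d) sigma_x]"
  note F = clifford_systemD[OF C]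
  have E: "E \<in> carrier_mat d d"
    using F(1) by (simp add: unitary_def)
  have G_old: "?G ! j = kron (F ! j) sigma_z" if "j < length F" for j
    using that by (simp add: nth_append)
  have G_new: "?G ! length F = kron (1\<^sub>m d) sigma_x"
    by (simp add: nth_append)
  have anticommute: "?G ! j * ?G ! k = - (?G ! k * ?G ! j)"
    if jk: "j < length F" "k < Suc (length F)" "j \<noteq> k" for j k
  proof -
    have Fj: "F ! j \<in> carrier_mat d d"
      using F(2) nth_mem[OF jk(1)] by blast
    show ?thesis
    proof (cases "k < length F")
      case True
      have Fk: "F ! k \<in> carrier_mat d d"
        using F(2) nth_mem[OF True] by blast
      show ?thesis
        unfolding G_old[OF jk(1)] G_old[OF True]
        by (rule kron_anticommute_left[OF Fj Fk, where n = 2]) (simp_all add: F(6)[OF jk(1) True jk(3)])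
    next
      case False
      then have "k = length F"
        using jk(2) by simp
      show ?thesis
        unfolding G_old[OF jk(1)] \<open>k = length F\<close> G_new
        by (rule kron_anticommute_right[OF Fj one_carrier_mat, where n = 2])
          (use Fj in \<open>simp_all add: sigma_x_sigma_z\<close>)
    qed
  qed
  have "?G ! j * ?G ! k = - (?G ! k * ?G ! j)"
    if "j < length ?G" "k < length ?G" "j \<noteq> k" for j k
  proof (cases "j < length F")
    case True
    then show ?thesis
      using anticommute that by simp
  next
    case False
    then have "?G ! k * ?G ! j = - (?G ! j * ?G ! k)"
      using anticommute that by simp
    then show ?thesis
      by simp
  qed
  moreover have "\<forall>A\<in>set ?G. clifford_generator (d * 2) (kron E sigma_z) A"
    using C clifford_generator_kron_sigma_z[OF E] clifford_generator_kron_sigma_x[OF E]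
    by (auto simp: clifford_system_def)
  moreover have "unitary (d * 2) (kron E sigma_z)"
    by (rule unitary_kron[OF F(1)]) (simp add: unitary_def adjoint_sigma_z sigma_z_sq)
  ultimately show ?thesis
    unfolding clifford_system_def by blast
qed

lemma length_Fg: "length (Fg (Suc (Suc m))) = Suc (Suc m)"
  by (induction m) simp_all

lemma clifford_system_Fg: "\<exists>E. clifford_system (2 ^ Suc m) (Fg (Suc (Suc m))) E"
proof (induction m)
  case 0
  show ?case
    using clifford_system_pauli by auto
next
  case (Suc m)
  then obtain E where "clifford_system (2 ^ Suc m) (Fg (Suc (Suc m))) E"
    by blast
  then have "clifford_system (2 ^ Suc m * 2) (Fg (Suc (Suc (Suc m)))) (kron E sigma_z)"
    unfolding Fg.simps by (rule clifford_system_extend)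
  then show ?case
    unfolding power_Suc2[of "2 :: nat" "Suc m"] by blast
qed

section \<open>Reflections generate the orthogonal group\<close>

definition householder :: "nat \<Rightarrow> (nat \<Rightarrow> real) \<Rightarrow> real mat" where
  "householder g v = mat g g (\<lambda>(i,j). (if i = j then 1 else 0) - 2 * v i * v j)"

lemma householder_carrier[simp]:
  "householder g v \<in> carrier_mat g g" "dim_row (householder g v) = g" "dim_col (householder g v) = g"
  by (auto simp: householder_def)

lemma index_householder[simp]:
  "i < g \<Longrightarrow> j < g \<Longrightarrow> householder g v $$ (i,j) = (if i = j then 1 else 0) - 2 * v i * v j"
  by (simp add: householder_def)

lemma transpose_householder: "transpose_mat (householder g v) = householder g v"
  by (rule eq_matI) auto

lemma index_householder_mult:
  assumes U: "U \<in> carrier_mat g n" and ij: "i < g" "j < n"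
  shows "(householder g v * U) $$ (i,j) = U $$ (i,j) - 2 * v i * (\<Sum>l<g. v l * U $$ (l,j))"
proof -
  have "(householder g v * U) $$ (i,j) = (\<Sum>l<g. ((if i = l then 1 else 0) - 2 * v i * v l) * U $$ (l,j))"
    using U ij by (simp add: scalar_prod_def lessThan_atLeast0 del: sum.distrib)
  also have "\<dots> = (\<Sum>l<g. (if l = i then U $$ (l,j) else 0) - 2 * v i * (v l * U $$ (l,j)))"
    by (rule sum.cong) (auto simp: algebra_simps)
  also have "\<dots> = U $$ (i,j) - 2 * v i * (\<Sum>l<g. v l * U $$ (l,j))"
    using ij by (simp add: sum_subtractf sum_distrib_left)
  finally show ?thesis .
qed

lemma householder_mult_householder:
  assumes v: "(\<Sum>j<g. (v j)^2) = 1"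
  shows "householder g v * householder g v = 1\<^sub>m g"
proof (rule eq_matI)
  fix a b assume "a < dim_row (1\<^sub>m g :: real mat)" "b < dim_col (1\<^sub>m g :: real mat)"
  then have ab: "a < g" "b < g"
    by auto
  have "(\<Sum>l<g. v l * householder g v $$ (l,b)) = (\<Sum>l<g. (if l = b then v l else 0) - 2 * v b * (v l)^2)"
    by (rule sum.cong) (use ab in \<open>auto simp: algebra_simps power2_eq_square\<close>)
  also have "\<dots> = - v b"
    using ab v by (simp add: sum_subtractf sum_distrib_left[symmetric])
  finally show "(householder g v * householder g v) $$ (a,b) = (1\<^sub>m g :: real mat) $$ (a,b)"
    using ab by (simp add: index_householder_mult[of _ g g] del: index_mult_mat(1))
qed auto

lemma real_orthogonal_columns:
  assumes U: "real_orthogonal g U" and ab: "a < g" "b < g"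
  shows "(\<Sum>i<g. U $$ (i,a) * U $$ (i,b)) = (if a = b then 1 else 0)"
proof -
  have Uc: "U \<in> carrier_mat g g" and T: "transpose_mat U * U = 1\<^sub>m g"
    using U by (auto simp: real_orthogonal_def)
  have "(transpose_mat U * U) $$ (a,b) = (\<Sum>i<g. U $$ (i,a) * U $$ (i,b))"
    using Uc ab by (simp add: scalar_prod_def lessThan_atLeast0 del: sum.distrib)
  then show ?thesis
    using T ab by simp
qed

lemma householder_mult_householder_mult:
  assumes v: "(\<Sum>j<g. (v j)^2) = 1" and U: "U \<in> carrier_mat g n"
  shows "householder g v * (householder g v * U) = U"
proof -
  have "householder g v * (householder g v * U) = householder g v * householder g v * U"
    by (simp only: assoc_mult_mat[OF householder_carrier(1) householder_carrier(1) U])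
  then show ?thesis
    using U by (simp add: householder_mult_householder[OF v])
qed

lemma real_orthogonal_householder_mult:
  assumes U: "real_orthogonal g U" and v: "(\<Sum>j<g. (v j)^2) = 1"
  shows "real_orthogonal g (householder g v * U)"
proof -
  let ?H = "householder g v"
  have Uc: "U \<in> carrier_mat g g" and T: "transpose_mat U * U = 1\<^sub>m g"
    using U by (auto simp: real_orthogonal_def)
  have HU: "?H * U \<in> carrier_mat g g"
    using mult_carrier_mat[OF householder_carrier(1) Uc] .
  have "transpose_mat (?H * U) * (?H * U) = transpose_mat U * ?H * (?H * U)"
    using transpose_mult[of ?H g g U g] Uc by (simp add: transpose_householder)
  also have "\<dots> = transpose_mat U * (?H * (?H * U))"
    by (rule assoc_mult_mat[OF transpose_carrier_mat[THEN iffD2, OF Uc] householder_carrier(1) HU])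
  also have "\<dots> = 1\<^sub>m g"
    by (simp only: householder_mult_householder_mult[OF v Uc] T)
  finally show ?thesis
    using HU by (simp add: real_orthogonal_def)
qed

lemma householder_reflect_to_basis:
  fixes u :: "nat \<Rightarrow> real"
  assumes u: "(\<Sum>i<g. (u i)^2) = 1" and k: "k < g" and ne: "\<exists>i<g. u i \<noteq> (if i = k then 1 else 0)"
  obtains v where "(\<Sum>i<g. (v i)^2) = 1"
    "\<And>i. i < g \<Longrightarrow> u i - 2 * v i * (\<Sum>l<g. v l * u l) = (if i = k then 1 else 0)"
    "\<And>i. i \<noteq> k \<Longrightarrow> u i = 0 \<Longrightarrow> v i = 0"
proof -
  define w where "w i = u i - (if i = k then 1 else 0)" for i
  define s where "s = (\<Sum>i<g. (w i)^2)"
  have s_eq: "s = 2 - 2 * u k"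
  proof -
    have "(w i)^2 = (u i)^2 - (if i = k then 2 * u i else 0) + (if i = k then 1 else 0)" for i
      by (auto simp: w_def power2_eq_square algebra_simps)
    then show ?thesis
      using u k by (simp add: s_def sum.distrib sum_subtractf)
  qed
  obtain i0 where i0: "i0 < g" "w i0 \<noteq> 0"
    using ne by (auto simp: w_def)
  have s_pos: "s > 0"
  proof -
    have "0 < (w i0)^2"
      using i0 by simp
    also have "\<dots> \<le> s"
      unfolding s_def by (rule member_le_sum) (use i0 in auto)
    finally show ?thesis .
  qed
  define v where "v i = w i / sqrt s" for i
  have "(\<Sum>i<g. (v i)^2) = (\<Sum>i<g. (w i)^2) / s"
    using s_pos by (simp add: v_def power_divide sum_divide_distrib)
  then have v_unit: "(\<Sum>i<g. (v i)^2) = 1"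
    using s_pos by (simp add: s_def)
  have "(\<Sum>l<g. w l * u l) = (\<Sum>l<g. (u l)^2 - (if l = k then u l else 0))"
    by (rule sum.cong) (auto simp: w_def power2_eq_square algebra_simps)
  also have "\<dots> = 1 - u k"
    using u k by (simp add: sum_subtractf)
  finally have vu: "(\<Sum>l<g. v l * u l) = (1 - u k) / sqrt s"
    by (simp add: v_def sum_divide_distrib[symmetric])
  have sqrt_sq: "sqrt s * sqrt s = s"
    using s_pos by simp
  have "u i - 2 * v i * (\<Sum>l<g. v l * u l) = u i - w i * (2 - 2 * u k) / s" for i
  proof -
    have "2 * v i * ((1 - u k) / sqrt s) = w i * (2 - 2 * u k) / (sqrt s * sqrt s)"
      using s_pos by (simp add: v_def field_simps)
    then show ?thesis
      by (simp only: vu sqrt_sq)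
  qed
  then have "u i - 2 * v i * (\<Sum>l<g. v l * u l) = (if i = k then 1 else 0)" for i
    using s_pos by (simp add: s_eq[symmetric] w_def)
  moreover have "v i = 0" if "i \<noteq> k" "u i = 0" for i
    using that by (simp add: v_def w_def)
  ultimately show ?thesis
    using that v_unit by blast
qed

lemma householder_fix_column:
  assumes U: "real_orthogonal g U" and k: "k < g"
    and fixed: "\<forall>i j. k < j \<longrightarrow> j < g \<longrightarrow> i < g \<longrightarrow> U $$ (i,j) = (if i = j then 1 else 0)"
    and moved: "\<exists>i<g. U $$ (i,k) \<noteq> (if i = k then 1 else 0)"
  obtains v where "(\<Sum>j<g. (v j)^2) = 1"
    "\<forall>i j. k \<le> j \<longrightarrow> j < g \<longrightarrow> i < g \<longrightarrow> (householder g v * U) $$ (i,j) = (if i = j then 1 else 0)"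
proof -
  define u where "u i = U $$ (i,k)" for i
  have Uc: "U \<in> carrier_mat g g"
    using U by (simp add: real_orthogonal_def)
  have unit: "(\<Sum>i<g. (u i)^2) = 1"
    using real_orthogonal_columns[OF U k k] by (simp add: u_def power2_eq_square)
  have zero: "u j = 0" if "k < j" "j < g" for j
  proof -
    have "(\<Sum>i<g. U $$ (i,j) * U $$ (i,k)) = (\<Sum>i<g. if i = j then u i else 0)"
      by (rule sum.cong) (use fixed that in \<open>auto simp: u_def\<close>)
    then show ?thesis
      using real_orthogonal_columns[OF U that(2) k] that by simp
  qed
  obtain v where v: "(\<Sum>i<g. (v i)^2) = 1"
    "\<And>i. i < g \<Longrightarrow> u i - 2 * v i * (\<Sum>l<g. v l * u l) = (if i = k then 1 else 0)"
    "\<And>i. i \<noteq> k \<Longrightarrow> u i = 0 \<Longrightarrow> v i = 0"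
    using householder_reflect_to_basis[OF unit k] moved by (auto simp: u_def)
  have "(householder g v * U) $$ (i,j) = (if i = j then 1 else 0)" if ij: "k \<le> j" "j < g" "i < g" for i j
  proof (cases "j = k")
    case True
    then show ?thesis
      using v(2)[OF ij(3)] ij by (simp add: index_householder_mult[OF Uc] u_def)
  next
    case False
    then have j: "k < j"
      using ij by simp
    have "(\<Sum>l<g. v l * U $$ (l,j)) = (\<Sum>l<g. if l = j then v j else 0)"
      by (rule sum.cong) (use fixed j ij in auto)
    also have "\<dots> = 0"
      using v(3)[OF False zero[OF j ij(2)]] by simp
    finally show ?thesis
      using fixed j ij by (simp add: index_householder_mult[OF Uc])
  qed
  then show ?thesis
    using that v(1) by blast
qed

lemma real_orthogonal_reflection_induct:
  assumes U: "real_orthogonal g U" and one: "P (1\<^sub>m g)"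
    and reflection: "\<And>v A. (\<Sum>j<g. (v j)^2) = 1 \<Longrightarrow> real_orthogonal g A \<Longrightarrow> P A \<Longrightarrow> P (householder g v * A)"
  shows "P U"
proof -
  \<comment> \<open>Induction on the number k of leading columns that may differ from those of the identity.\<close>
  have "P U" if "k \<le> g" "real_orthogonal g U"
    "\<forall>i j. k \<le> j \<longrightarrow> j < g \<longrightarrow> i < g \<longrightarrow> U $$ (i,j) = (if i = j then 1 else 0)" for k U
    using that
  proof (induction k arbitrary: U)
    case 0
    then have "U = 1\<^sub>m g"
      by (intro eq_matI) (auto simp: real_orthogonal_def)
    then show ?case
      using one by simp
  next
    case (Suc k)
    then have k: "k < g"
      by simp
    show ?case
    proof (cases "\<forall>i<g. U $$ (i,k) = (if i = k then 1 else 0)")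
      case True
      then have "\<forall>i j. k \<le> j \<longrightarrow> j < g \<longrightarrow> i < g \<longrightarrow> U $$ (i,j) = (if i = j then 1 else 0)"
        using Suc.prems(3) by (metis Suc_leI le_neq_implies_less)
      then show ?thesis
        using Suc.IH[of U] Suc.prems(2) k by simp
    next
      case False
      moreover have "\<forall>i j. k < j \<longrightarrow> j < g \<longrightarrow> i < g \<longrightarrow> U $$ (i,j) = (if i = j then 1 else 0)"
        using Suc.prems(3) by (simp add: Suc_le_eq)
      ultimately obtain v where v: "(\<Sum>j<g. (v j)^2) = 1"
        "\<forall>i j. k \<le> j \<longrightarrow> j < g \<longrightarrow> i < g \<longrightarrow> (householder g v * U) $$ (i,j) = (if i = j then 1 else 0)"
        using householder_fix_column[OF Suc.prems(2) k] by blast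
      have A: "real_orthogonal g (householder g v * U)"
        by (rule real_orthogonal_householder_mult[OF Suc.prems(2) v(1)])
      have "P (householder g v * (householder g v * U))"
        using reflection[OF v(1) A] Suc.IH[OF _ A v(2)] k by simp
      moreover have "householder g v * (householder g v * U) = U"
        using Suc.prems(2) unfolding real_orthogonal_def by (blast intro: householder_mult_householder_mult[OF v(1)])
      ultimately show ?thesis
        by simp
    qed
  qed
  from this[of g U] show ?thesis
    using U by simp
qed

section \<open>Unitary lifts of orthogonal matrices\<close>

lemma lincomb_uminus:
  assumes F: "set F \<subseteq> carrier_mat d d"
  shows "lincomb d F (\<lambda>j. - c j) = - lincomb d F c"
  by (rule eq_matI) (simp_all add: index_lincomb[OF F] sum_negf)

lemma lincomb_sq:
  assumes C: "clifford_system d F E" and v: "(\<Sum>j<length F. (v j)^2) = 1"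
  shows "lincomb d F v * lincomb d F v = 1\<^sub>m d"
proof -
  let ?V = "lincomb d F v"
  have "(\<Sum>j<length F. v j * v j) = 1"
    using v by (simp add: power2_eq_square)
  note sum = lincomb_anticommutator[OF C, of v v, unfolded this]
  show ?thesis
  proof (rule eq_matI)
    fix r s assume "r < dim_row (1\<^sub>m d :: complex mat)" "s < dim_col (1\<^sub>m d :: complex mat)"
    then have rs: "r < d" "s < d"
      by auto
    have "(?V * ?V) $$ (r,s) + (?V * ?V) $$ (r,s) = 2 * (1\<^sub>m d :: complex mat) $$ (r,s)"
      using arg_cong[OF sum, of "\<lambda>M. M $$ (r,s)"] rs by simp
    then show "(?V * ?V) $$ (r,s) = (1\<^sub>m d :: complex mat) $$ (r,s)"
      by simp
  qed auto
qed

lemma lincomb_conjugate_generator: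
  assumes C: "clifford_system d F E" and v: "(\<Sum>j<length F. (v j)^2) = 1" and k: "k < length F"
  shows "lincomb d F v * F ! k * lincomb d F v = complex_of_real (2 * v k) \<cdot>\<^sub>m lincomb d F v - F ! k"
proof -
  let ?V = "lincomb d F v" and ?c = "complex_of_real (2 * v k)"
  have V: "?V \<in> carrier_mat d d"
    by simp
  have Fk: "F ! k \<in> carrier_mat d d"
    using clifford_systemD(2)[OF C] nth_mem[OF k] by blast
  have "(\<Sum>j<length F. v j * (if j = k then 1 else 0)) = v k"
    using k by (simp add: if_distrib cong: if_cong)
  then have anticommute: "?V * F ! k + F ! k * ?V = ?c \<cdot>\<^sub>m 1\<^sub>m d"
    using lincomb_anticommutator[OF C, of v "\<lambda>j. if j = k then 1 else 0"]
    by (simp add: lincomb_unit_vector[OF clifford_systemD(2)[OF C] k])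
  have VF: "?V * F ! k = ?c \<cdot>\<^sub>m 1\<^sub>m d - F ! k * ?V"
  proof (rule eq_matI)
    fix r s assume "r < dim_row (?c \<cdot>\<^sub>m 1\<^sub>m d - F ! k * ?V)" "s < dim_col (?c \<cdot>\<^sub>m 1\<^sub>m d - F ! k * ?V)"
    then have rs: "r < d" "s < d"
      using Fk by auto
    have "(?V * F ! k) $$ (r,s) + (F ! k * ?V) $$ (r,s) = (?c \<cdot>\<^sub>m 1\<^sub>m d) $$ (r,s)"
      using arg_cong[OF anticommute, of "\<lambda>M. M $$ (r,s)"] rs Fk by simp
    then show "(?V * F ! k) $$ (r,s) = (?c \<cdot>\<^sub>m 1\<^sub>m d - F ! k * ?V) $$ (r,s)"
      using rs Fk by (simp add: eq_diff_eq)
  qed (use Fk in auto)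
  have "?V * F ! k * ?V = (?c \<cdot>\<^sub>m 1\<^sub>m d - F ! k * ?V) * ?V"
    by (simp only: VF)
  also have "\<dots> = (?c \<cdot>\<^sub>m 1\<^sub>m d) * ?V - F ! k * ?V * ?V"
    by (rule minus_mult_distrib_mat) (use Fk in auto)
  also have "F ! k * ?V * ?V = F ! k"
    using Fk by (simp only: assoc_mult_mat[OF Fk V V] lincomb_sq[OF C v] right_mult_one_mat[OF Fk])
  also have "(?c \<cdot>\<^sub>m 1\<^sub>m d) * ?V = ?c \<cdot>\<^sub>m ?V"
    by (simp only: mult_smult_assoc_mat[OF one_carrier_mat V] left_mult_one_mat[OF V])
  finally show ?thesis .
qed

lemma lincomb_householder_column:
  assumes F: "set F \<subseteq> carrier_mat d d" and k: "k < length F"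
  shows "lincomb d F (\<lambda>j. (- householder (length F) v) $$ (j,k)) =
    complex_of_real (2 * v k) \<cdot>\<^sub>m lincomb d F v - F ! k"
    (is "?L = ?R")
proof -
  let ?g = "length F"
  have Fk: "F ! k \<in> carrier_mat d d"
    using F nth_mem[OF k] by blast
  show ?thesis
  proof (rule eq_matI)
    fix r s assume "r < dim_row ?R" "s < dim_col ?R"
    then have rs: "r < d" "s < d"
      using Fk by auto
    have "?L $$ (r,s) = (\<Sum>j<?g. complex_of_real (2 * v k) * (complex_of_real (v j) * F ! j $$ (r,s)) -
        (if j = k then F ! k $$ (r,s) else 0))"
      unfolding index_lincomb[OF F rs] by (rule sum.cong) (use k in \<open>auto simp: algebra_simps\<close>)
    also have "\<dots> = ?R $$ (r,s)"
      using rs k Fk by (simp add: sum_subtractf sum_distrib_left index_lincomb[OF F rs])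
    finally show "?L $$ (r,s) = ?R $$ (r,s)" .
  qed (use Fk in auto)
qed

definition unitary_lift :: "nat \<Rightarrow> complex mat list \<Rightarrow> real mat \<Rightarrow> complex mat \<Rightarrow> bool" where
  "unitary_lift d F U W \<longleftrightarrow> unitary d W \<and>
     (\<forall>k<length F. W * F ! k * adjoint_mat W = lincomb d F (\<lambda>j. U $$ (j,k)))"

lemma unitary_lift_one:
  assumes F: "set F \<subseteq> carrier_mat d d"
  shows "unitary_lift d F (1\<^sub>m (length F)) (1\<^sub>m d)"
proof -
  have "1\<^sub>m d * F ! k * adjoint_mat (1\<^sub>m d) = lincomb d F (\<lambda>j. 1\<^sub>m (length F) $$ (j,k))"
    if k: "k < length F" for k
  proof -
    have "lincomb d F (\<lambda>j. 1\<^sub>m (length F) $$ (j,k)) = lincomb d F (\<lambda>j. if j = k then 1 else 0)"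
      by (rule lincomb_cong) (simp add: k)
    also have "\<dots> = F ! k"
      by (rule lincomb_unit_vector[OF F k])
    finally show ?thesis
      using F nth_mem[OF k] by auto
  qed
  then show ?thesis
    by (simp add: unitary_lift_def unitary_def)
qed

lemma unitary_lift_conjugate_lincomb:
  assumes L: "unitary_lift d F U W" and F: "set F \<subseteq> carrier_mat d d"
  shows "W * lincomb d F c * adjoint_mat W = lincomb d F (\<lambda>j. \<Sum>l<length F. U $$ (j,l) * c l)"
proof -
  let ?g = "length F"
  have W: "W \<in> carrier_mat d d"
    using L by (simp add: unitary_lift_def unitary_def)
  have lift: "W * F ! l * adjoint_mat W = lincomb d F (\<lambda>j. U $$ (j,l))" if "l < ?g" for l
    using L that by (simp add: unitary_lift_def)
  have Fl: "F ! l \<in> carrier_mat d d" if "l < ?g" for l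
    using F nth_mem[OF that] by blast
  have "W * lincomb d F c * adjoint_mat W =
      mat_sum d (\<lambda>l. W * (complex_of_real (c l) \<cdot>\<^sub>m F ! l) * adjoint_mat W) {..<?g}"
    unfolding lincomb_def using W Fl by (intro conjugate_mat_sum) auto
  also have "\<dots> = mat_sum d (\<lambda>l. complex_of_real (c l) \<cdot>\<^sub>m lincomb d F (\<lambda>j. U $$ (j,l))) {..<?g}"
    by (rule mat_sum_cong) (simp add: conjugate_smult[OF W Fl] lift)
  also have "\<dots> = lincomb d F (\<lambda>j. \<Sum>l<?g. U $$ (j,l) * c l)"
  proof (rule eq_matI)
    fix r s assume "r < dim_row (lincomb d F (\<lambda>j. \<Sum>l<?g. U $$ (j,l) * c l))"
      "s < dim_col (lincomb d F (\<lambda>j. \<Sum>l<?g. U $$ (j,l) * c l))"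
    then have rs: "r < d" "s < d"
      by auto
    have "mat_sum d (\<lambda>l. complex_of_real (c l) \<cdot>\<^sub>m lincomb d F (\<lambda>j. U $$ (j,l))) {..<?g} $$ (r,s) =
        (\<Sum>l<?g. complex_of_real (c l) * (\<Sum>j<?g. complex_of_real (U $$ (j,l)) * F ! j $$ (r,s)))"
      using rs by (simp add: index_lincomb[OF F rs])
    also have "\<dots> = (\<Sum>j<?g. complex_of_real (\<Sum>l<?g. U $$ (j,l) * c l) * F ! j $$ (r,s))"
      unfolding sum_distrib_left of_real_sum sum_distrib_right
      by (subst sum.swap) (simp add: ac_simps)
    also have "\<dots> = lincomb d F (\<lambda>j. \<Sum>l<?g. U $$ (j,l) * c l) $$ (r,s)"
      by (simp add: index_lincomb[OF F rs])
    finally show "mat_sum d (\<lambda>l. complex_of_real (c l) \<cdot>\<^sub>m lincomb d F (\<lambda>j. U $$ (j,l))) {..<?g} $$ (r,s) =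
        lincomb d F (\<lambda>j. \<Sum>l<?g. U $$ (j,l) * c l) $$ (r,s)" .
  qed auto
  finally show ?thesis .
qed

lemma unitary_lift_mult:
  assumes L1: "unitary_lift d F U1 W1" and L2: "unitary_lift d F U2 W2" and F: "set F \<subseteq> carrier_mat d d"
    and U1: "U1 \<in> carrier_mat (length F) (length F)" and U2: "U2 \<in> carrier_mat (length F) (length F)"
  shows "unitary_lift d F (U1 * U2) (W1 * W2)"
proof -
  have W1: "W1 \<in> carrier_mat d d" and W2: "W2 \<in> carrier_mat d d"
    using L1 L2 by (auto simp: unitary_lift_def unitary_def)
  have "(W1 * W2) * F ! k * adjoint_mat (W1 * W2) = lincomb d F (\<lambda>j. (U1 * U2) $$ (j,k))"
    if k: "k < length F" for k
  proof -
    have "(W1 * W2) * F ! k * adjoint_mat (W1 * W2) = W1 * (W2 * F ! k * adjoint_mat W2) * adjoint_mat W1"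
      using conjugate_by_mult[OF W1 W2] F nth_mem[OF k] by blast
    also have "\<dots> = W1 * lincomb d F (\<lambda>l. U2 $$ (l,k)) * adjoint_mat W1"
      using L2 k by (simp add: unitary_lift_def)
    also have "\<dots> = lincomb d F (\<lambda>j. \<Sum>l<length F. U1 $$ (j,l) * U2 $$ (l,k))"
      by (rule unitary_lift_conjugate_lincomb[OF L1 F])
    also have "\<dots> = lincomb d F (\<lambda>j. (U1 * U2) $$ (j,k))"
      by (rule lincomb_cong) (use U1 U2 k in \<open>simp add: scalar_prod_def lessThan_atLeast0\<close>)
    finally show ?thesis .
  qed
  moreover have "unitary d (W1 * W2)"
    using L1 L2 by (intro unitary_mult) (simp_all add: unitary_lift_def)
  ultimately show ?thesis
    by (simp add: unitary_lift_def)
qed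

lemma unitary_lift_neg_one:
  assumes C: "clifford_system d F E"
  shows "unitary_lift d F (- 1\<^sub>m (length F)) E"
proof -
  note F = clifford_systemD[OF C]
  have E: "E \<in> carrier_mat d d" "E * adjoint_mat E = 1\<^sub>m d"
    using F(1) by (auto simp: unitary_def)
  have "E * F ! k * adjoint_mat E = lincomb d F (\<lambda>j. (- 1\<^sub>m (length F)) $$ (j,k))"
    if k: "k < length F" for k
  proof -
    have Fk: "F ! k \<in> set F" "F ! k \<in> carrier_mat d d"
      using F(2) nth_mem[OF k] by auto
    have "E * F ! k * adjoint_mat E = - (F ! k * E * adjoint_mat E)"
      by (simp add: F(5)[OF Fk(1)])
    also have "F ! k * E * adjoint_mat E = F ! k"
      by (simp only: assoc_mult_mat[OF Fk(2) E(1) adjoint_carrier_mat[OF E(1)]] E(2) right_mult_one_mat[OF Fk(2)])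
    also have "- F ! k = lincomb d F (\<lambda>j. - (if j = k then 1 else 0))"
      by (simp add: lincomb_uminus[OF F(2)] lincomb_unit_vector[OF F(2) k])
    also have "\<dots> = lincomb d F (\<lambda>j. (- 1\<^sub>m (length F)) $$ (j,k))"
      by (rule lincomb_cong) (simp add: k)
    finally show ?thesis .
  qed
  then show ?thesis
    using F(1) by (simp add: unitary_lift_def)
qed

lemma unitary_lift_neg_householder:
  assumes C: "clifford_system d F E" and v: "(\<Sum>j<length F. (v j)^2) = 1"
  shows "unitary_lift d F (- householder (length F) v) (lincomb d F v)"
proof -
  have V_adj: "adjoint_mat (lincomb d F v) = lincomb d F v"
    by (rule adjoint_lincomb) (use clifford_systemD(2,3)[OF C] in auto)
  then have "unitary d (lincomb d F v)"
    by (simp add: unitary_def lincomb_sq[OF C v])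
  then show ?thesis
    by (simp add: unitary_lift_def V_adj lincomb_conjugate_generator[OF C v]
        lincomb_householder_column[OF clifford_systemD(2)[OF C]])
qed

(* E is needed because conjugation by lincomb d F v alone realises only the negated reflection. *)
lemma unitary_lift_householder:
  assumes C: "clifford_system d F E" and v: "(\<Sum>j<length F. (v j)^2) = 1"
  shows "unitary_lift d F (householder (length F) v) (E * lincomb d F v)"
proof -
  have "unitary_lift d F (- 1\<^sub>m (length F) * - householder (length F) v) (E * lincomb d F v)"
    by (rule unitary_lift_mult[OF unitary_lift_neg_one[OF C] unitary_lift_neg_householder[OF C v]
          clifford_systemD(2)[OF C]]) simp_all
  then show ?thesis
    by simp
qed

lemma exists_unitary_lift:
  assumes C: "clifford_system d F E" and U: "real_orthogonal (length F) U"
  shows "\<exists>W. unitary_lift d F U W"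
proof (rule real_orthogonal_reflection_induct[OF U])
  show "\<exists>W. unitary_lift d F (1\<^sub>m (length F)) W"
    using unitary_lift_one[OF clifford_systemD(2)[OF C]] by blast
next
  fix v :: "nat \<Rightarrow> real" and A :: "real mat"
  assume v: "(\<Sum>j<length F. (v j)^2) = 1" and A: "real_orthogonal (length F) A"
    and "\<exists>W. unitary_lift d F A W"
  then obtain W where W: "unitary_lift d F A W"
    by blast
  have "unitary_lift d F (householder (length F) v * A) (E * lincomb d F v * W)"
    by (rule unitary_lift_mult[OF unitary_lift_householder[OF C v] W clifford_systemD(2)[OF C]])
      (use A in \<open>simp_all add: real_orthogonal_def\<close>)
  then show "\<exists>W. unitary_lift d F (householder (length F) v * A) W"
    by blast
qed

section \<open>Invariance of the free spectrahedron\<close>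

lemma sum_swap_pairs:
  "(\<Sum>i\<in>A. \<Sum>j\<in>B. \<Sum>a\<in>C. \<Sum>b\<in>D. f i j a b) = (\<Sum>a\<in>C. \<Sum>b\<in>D. \<Sum>i\<in>A. \<Sum>j\<in>B. f i j a b)"
proof -
  have "(\<Sum>i\<in>A. \<Sum>j\<in>B. \<Sum>a\<in>C. \<Sum>b\<in>D. f i j a b) = (\<Sum>i\<in>A. \<Sum>a\<in>C. \<Sum>b\<in>D. \<Sum>j\<in>B. f i j a b)"
    by (rule sum.cong[OF refl], subst sum.swap, rule sum.cong[OF refl], rule sum.swap)
  also have "\<dots> = (\<Sum>a\<in>C. \<Sum>b\<in>D. \<Sum>i\<in>A. \<Sum>j\<in>B. f i j a b)"
    by (subst sum.swap, rule sum.cong[OF refl], rule sum.swap)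
  finally show ?thesis .
qed

lemma quadratic_form_congruence:
  assumes V: "V \<in> carrier_mat N N" and M: "M \<in> carrier_mat N N" and w: "w \<in> carrier_vec N"
  shows "(\<Sum>i<N. \<Sum>j<N. cnj (w $ i) * (V * M * adjoint_mat V) $$ (i,j) * w $ j) =
    (\<Sum>a<N. \<Sum>b<N. cnj ((adjoint_mat V *\<^sub>v w) $ a) * M $$ (a,b) * (adjoint_mat V *\<^sub>v w) $ b)"
proof -
  let ?z = "adjoint_mat V *\<^sub>v w"
  have z: "?z $ a = (\<Sum>i<N. cnj (V $$ (i,a)) * w $ i)" if "a < N" for a
    using that V w by (simp add: scalar_prod_def lessThan_atLeast0)
  have entry: "(V * M * adjoint_mat V) $$ (i,j) = (\<Sum>a<N. \<Sum>b<N. V $$ (i,a) * M $$ (a,b) * cnj (V $$ (j,b)))"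
    if "i < N" "j < N" for i j
  proof -
    have "(V * M * adjoint_mat V) $$ (i,j) = (\<Sum>b<N. (\<Sum>a<N. V $$ (i,a) * M $$ (a,b)) * cnj (V $$ (j,b)))"
      using that V M by (simp add: scalar_prod_def lessThan_atLeast0 del: sum.distrib)
    also have "\<dots> = (\<Sum>a<N. \<Sum>b<N. V $$ (i,a) * M $$ (a,b) * cnj (V $$ (j,b)))"
      unfolding sum_distrib_right by (rule sum.swap)
    finally show ?thesis .
  qed
  have "(\<Sum>i<N. \<Sum>j<N. cnj (w $ i) * (V * M * adjoint_mat V) $$ (i,j) * w $ j) =
      (\<Sum>i<N. \<Sum>j<N. \<Sum>a<N. \<Sum>b<N. (cnj (w $ i) * V $$ (i,a)) * M $$ (a,b) * (cnj (V $$ (j,b)) * w $ j))"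
    by (intro sum.cong refl) (simp add: entry sum_distrib_left sum_distrib_right ac_simps)
  also have "\<dots> = (\<Sum>a<N. \<Sum>b<N. \<Sum>i<N. \<Sum>j<N. (cnj (w $ i) * V $$ (i,a)) * M $$ (a,b) * (cnj (V $$ (j,b)) * w $ j))"
    by (rule sum_swap_pairs)
  also have "\<dots> = (\<Sum>a<N. \<Sum>b<N. cnj (?z $ a) * M $$ (a,b) * ?z $ b)"
    by (intro sum.cong refl) (simp add: z sum_distrib_left sum_distrib_right ac_simps)
  finally show ?thesis .
qed

lemma psd_congruence:
  assumes P: "psd N M" and V: "V \<in> carrier_mat N N"
  shows "psd N (V * M * adjoint_mat V)"
proof -
  have M: "M \<in> carrier_mat N N" "adjoint_mat M = M"
    using P by (auto simp: psd_def self_adjoint_iff)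
  have V': "adjoint_mat V \<in> carrier_mat N N"
    using V by simp
  have "adjoint_mat (V * M * adjoint_mat V) = V * (M * adjoint_mat V)"
    using V M V' by (simp add: adjoint_mat_mult[of "V * M" N N "adjoint_mat V" N] adjoint_mat_mult[of V N N M N])
  also have "\<dots> = V * M * adjoint_mat V"
    by (rule assoc_mult_mat[OF V M(1) V', symmetric])
  finally have "self_adjoint N (V * M * adjoint_mat V)"
    using mult_carrier_mat[OF mult_carrier_mat[OF V M(1)] V'] unfolding self_adjoint_iff by blast
  moreover have "(\<Sum>i<N. \<Sum>j<N. cnj (w $ i) * (V * M * adjoint_mat V) $$ (i,j) * w $ j) \<ge> 0"
    if w: "w \<in> carrier_vec N" for w
  proof -
    have "adjoint_mat V *\<^sub>v w \<in> carrier_vec N"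
      using V' w by (rule mult_mat_vec_carrier)
    then show ?thesis
      using P unfolding quadratic_form_congruence[OF V M(1) w] psd_def by blast
  qed
  ultimately show ?thesis
    unfolding psd_def by blast
qed

lemma length_orth_act[simp]: "length (orth_act U X) = length X"
  by (simp add: orth_act_def)

lemma nth_orth_act:
  assumes X: "set X \<subseteq> carrier_mat n n" and j: "j < length X"
  shows "orth_act U X ! j = mat n n (\<lambda>rc. \<Sum>k<length X. complex_of_real (U $$ (j,k)) * X ! k $$ rc)"
proof -
  have "0 < length X"
    using j by linarith
  with X have "X ! 0 \<in> carrier_mat n n"
    using nth_mem by blast
  then show ?thesis
    using j by (simp add: orth_act_def)
qed

lemma self_adjoint_orth_act:
  assumes X: "\<forall>A\<in>set X. self_adjoint n A" and j: "j < length X"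
  shows "self_adjoint n (orth_act U X ! j)"
proof -
  have Xc: "set X \<subseteq> carrier_mat n n"
    using X by (auto simp: self_adjoint_def)
  have hermitian: "X ! k $$ (a,b) = cnj (X ! k $$ (b,a))" if "k < length X" "a < n" "b < n" for k a b
    using X nth_mem[OF that(1)] that(2,3) unfolding self_adjoint_def by blast
  show ?thesis
    unfolding self_adjoint_def nth_orth_act[OF Xc j]
  proof (intro conjI allI impI)
    fix a b assume ab: "a < n" "b < n"
    have "(\<Sum>k<length X. complex_of_real (U $$ (j,k)) * X ! k $$ (a,b)) =
        cnj (\<Sum>k<length X. complex_of_real (U $$ (j,k)) * X ! k $$ (b,a))"
      unfolding cnj_sum by (rule sum.cong) (use hermitian[of _ a b] ab in simp_all)
    then show "mat n n (\<lambda>rc. \<Sum>k<length X. complex_of_real (U $$ (j,k)) * X ! k $$ rc) $$ (a,b) =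
        cnj (mat n n (\<lambda>rc. \<Sum>k<length X. complex_of_real (U $$ (j,k)) * X ! k $$ rc) $$ (b,a))"
      using ab by simp
  qed simp
qed

lemma pencil_eq_mat_sum: "pencil F X N = 1\<^sub>m N - mat_sum N (\<lambda>k. kron (F ! k) (X ! k)) {..<length F}"
  by (rule eq_matI) (auto simp: pencil_def)

lemma kron_conjugate:
  assumes W: "W \<in> carrier_mat d d" and A: "A \<in> carrier_mat d d" and X: "X \<in> carrier_mat n n"
  shows "kron W (1\<^sub>m n) * kron A X * adjoint_mat (kron W (1\<^sub>m n)) = kron (W * A * adjoint_mat W) X"
proof -
  have "kron W (1\<^sub>m n) * kron A X = kron (W * A) X"
    using W A X by (simp add: kron_mult[of _ d d _ n n _ d _ n])
  moreover have "adjoint_mat (kron W (1\<^sub>m n)) = kron (adjoint_mat W) (1\<^sub>m n)"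
    using adjoint_mat_kron[OF W one_carrier_mat] by simp
  ultimately show ?thesis
    using W A X by (simp add: kron_mult[of _ d d _ n n _ d _ n])
qed

lemma mat_sum_kron_lincomb:
  assumes F: "set F \<subseteq> carrier_mat d d" and X: "set X \<subseteq> carrier_mat n n" and len: "length X = length F"
  shows "mat_sum (d * n) (\<lambda>k. kron (lincomb d F (\<lambda>j. U $$ (j,k))) (X ! k)) {..<length F} =
    mat_sum (d * n) (\<lambda>j. kron (F ! j) (orth_act U X ! j)) {..<length F}"
proof (rule eq_matI)
  let ?g = "length F"
  fix r s assume "r < dim_row (mat_sum (d * n) (\<lambda>j. kron (F ! j) (orth_act U X ! j)) {..<?g})"
    "s < dim_col (mat_sum (d * n) (\<lambda>j. kron (F ! j) (orth_act U X ! j)) {..<?g})"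
  then have rs: "r < d * n" "s < d * n"
    by auto
  then have "n > 0"
    by (auto intro: gr0I)
  then have div_mod: "r div n < d" "s div n < d" "r mod n < n" "s mod n < n"
    using rs by (auto simp: less_mult_imp_div_less mult.commute)
  have dims: "dim_row (F ! j) = d" "dim_col (F ! j) = d" "dim_row (X ! j) = n" "dim_col (X ! j) = n"
    if "j < ?g" for j
  proof -
    have "F ! j \<in> carrier_mat d d" "X ! j \<in> carrier_mat n n"
      using F X nth_mem[OF that] nth_mem[of j X] that len by auto
    then show "dim_row (F ! j) = d" "dim_col (F ! j) = d" "dim_row (X ! j) = n" "dim_col (X ! j) = n"
      by auto
  qed
  have "(\<Sum>k<?g. kron (lincomb d F (\<lambda>j. U $$ (j,k))) (X ! k) $$ (r,s)) =
      (\<Sum>k<?g. \<Sum>j<?g. complex_of_real (U $$ (j,k)) * F ! j $$ (r div n, s div n) * X ! k $$ (r mod n, s mod n))"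
    by (intro sum.cong refl) (simp add: dims rs index_lincomb[OF F div_mod(1,2)] sum_distrib_right)
  also have "\<dots> = (\<Sum>j<?g. \<Sum>k<?g. complex_of_real (U $$ (j,k)) * F ! j $$ (r div n, s div n) * X ! k $$ (r mod n, s mod n))"
    by (rule sum.swap)
  also have "\<dots> = (\<Sum>j<?g. kron (F ! j) (orth_act U X ! j) $$ (r,s))"
    by (intro sum.cong refl)
      (simp add: dims rs div_mod nth_orth_act[OF X] len sum_distrib_left ac_simps)
  finally show "mat_sum (d * n) (\<lambda>k. kron (lincomb d F (\<lambda>j. U $$ (j,k))) (X ! k)) {..<?g} $$ (r,s) =
      mat_sum (d * n) (\<lambda>j. kron (F ! j) (orth_act U X ! j)) {..<?g} $$ (r,s)"
    using rs by simp
qed auto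

lemma pencil_unitary_lift:
  assumes L: "unitary_lift d F U W" and F: "set F \<subseteq> carrier_mat d d"
    and X: "set X \<subseteq> carrier_mat n n" and len: "length X = length F"
  shows "kron W (1\<^sub>m n) * pencil F X (d * n) * adjoint_mat (kron W (1\<^sub>m n)) =
    pencil F (orth_act U X) (d * n)"
proof -
  let ?V = "kron W (1\<^sub>m n)" and ?N = "d * n"
  let ?L = "mat_sum ?N (\<lambda>k. kron (F ! k) (X ! k)) {..<length F}"
  have W: "unitary d W" and lift: "\<And>k. k < length F \<Longrightarrow> W * F ! k * adjoint_mat W = lincomb d F (\<lambda>j. U $$ (j,k))"
    using L by (auto simp: unitary_lift_def)
  have "unitary ?N ?V"
    using unitary_kron[OF W, of n "1\<^sub>m n"] by (simp add: unitary_def)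
  then have V: "?V \<in> carrier_mat ?N ?N" "?V * adjoint_mat ?V = 1\<^sub>m ?N"
    by (simp_all add: unitary_def)
  have V': "adjoint_mat ?V \<in> carrier_mat ?N ?N"
    using V(1) by simp
  have Fk: "F ! k \<in> carrier_mat d d" and Xk: "X ! k \<in> carrier_mat n n" if "k < length F" for k
    using F X nth_mem[OF that] nth_mem[of k X] that len by (auto dest!: subsetD)
  have "?V * pencil F X ?N * adjoint_mat ?V = (?V * 1\<^sub>m ?N - ?V * ?L) * adjoint_mat ?V"
    unfolding pencil_eq_mat_sum by (subst mult_minus_distrib_mat[OF V(1)]) auto
  also have "\<dots> = ?V * 1\<^sub>m ?N * adjoint_mat ?V - ?V * ?L * adjoint_mat ?V"
    by (rule minus_mult_distrib_mat[OF _ _ V']) (use V(1) in auto)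
  also have "?V * 1\<^sub>m ?N * adjoint_mat ?V = 1\<^sub>m ?N"
    by (simp only: right_mult_one_mat[OF V(1)] V(2))
  also have "?V * ?L * adjoint_mat ?V = mat_sum ?N (\<lambda>k. ?V * kron (F ! k) (X ! k) * adjoint_mat ?V) {..<length F}"
    using V(1) Fk Xk by (intro conjugate_mat_sum) auto
  also have "\<dots> = mat_sum ?N (\<lambda>k. kron (lincomb d F (\<lambda>j. U $$ (j,k))) (X ! k)) {..<length F}"
  proof (rule mat_sum_cong)
    fix k assume "k \<in> {..<length F}"
    then have k: "k < length F"
      by simp
    have "W \<in> carrier_mat d d"
      using W by (simp add: unitary_def)
    then show "?V * kron (F ! k) (X ! k) * adjoint_mat ?V = kron (lincomb d F (\<lambda>j. U $$ (j,k))) (X ! k)"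
      by (simp only: kron_conjugate[OF \<open>W \<in> carrier_mat d d\<close> Fk[OF k] Xk[OF k]] lift[OF k])
  qed
  also have "\<dots> = mat_sum ?N (\<lambda>j. kron (F ! j) (orth_act U X ! j)) {..<length F}"
    by (rule mat_sum_kron_lincomb[OF F X len])
  also have "1\<^sub>m ?N - \<dots> = pencil F (orth_act U X) ?N"
    by (simp add: pencil_eq_mat_sum)
  finally show ?thesis .
qed

lemma free_spectrahedronE:
  assumes "X \<in> free_spectrahedron F"
  obtains n where "n > 0" "length X = length F" "\<forall>A\<in>set X. self_adjoint n A" "set X \<subseteq> carrier_mat n n"
    "psd (dim_row (F ! 0) * n) (pencil F X (dim_row (F ! 0) * n))"
proof -
  obtain n where n: "n > 0" "length X = length F" "\<forall>i<length X. self_adjoint n (X ! i)"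
    "psd (dim_row (F ! 0) * n) (pencil F X (dim_row (F ! 0) * n))"
    using assms unfolding free_spectrahedron_def by blast
  moreover from n(3) have "\<forall>A\<in>set X. self_adjoint n A"
    by (simp add: all_set_conv_all_nth)
  moreover from this have "set X \<subseteq> carrier_mat n n"
    by (auto simp: self_adjoint_iff)
  ultimately show thesis
    using that by blast
qed

lemma free_spectrahedron_orth_act:
  assumes L: "unitary_lift d F U W" and F: "set F \<subseteq> carrier_mat d d" "F \<noteq> []"
    and X: "X \<in> free_spectrahedron F"
  shows "orth_act U X \<in> free_spectrahedron F"
proof -
  obtain n where n: "n > 0" and len: "length X = length F" and sa: "\<forall>A\<in>set X. self_adjoint n A"
    and Xc: "set X \<subseteq> carrier_mat n n" and P: "psd (dim_row (F ! 0) * n) (pencil F X (dim_row (F ! 0) * n))"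
    using X by (rule free_spectrahedronE)
  have "F ! 0 \<in> carrier_mat d d"
    using F nth_mem[of 0 F] by blast
  then have d: "dim_row (F ! 0) = d"
    by simp
  have "kron W (1\<^sub>m n) \<in> carrier_mat (d * n) (d * n)"
    using L by (simp add: unitary_lift_def unitary_def)
  from psd_congruence[OF P[unfolded d] this]
  have "psd (dim_row (F ! 0) * n) (pencil F (orth_act U X) (dim_row (F ! 0) * n))"
    unfolding pencil_unitary_lift[OF L F(1) Xc len] d .
  moreover have "\<forall>i<length (orth_act U X). self_adjoint n (orth_act U X ! i)"
    using self_adjoint_orth_act[OF sa] by simp
  ultimately show ?thesis
    using n len unfolding free_spectrahedron_def by auto
qed

lemma real_orthogonal_sign_diag:
  assumes s: "\<forall>i. s i = 1 \<or> s i = -1"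
  shows "real_orthogonal g (mat g g (\<lambda>(i,j). if i = j then s i else 0))"
    (is "real_orthogonal g ?D")
proof -
  have "transpose_mat ?D * ?D = 1\<^sub>m g"
  proof (rule eq_matI)
    fix a b assume "a < dim_row (1\<^sub>m g :: real mat)" "b < dim_col (1\<^sub>m g :: real mat)"
    then have ab: "a < g" "b < g"
      by auto
    have "(transpose_mat ?D * ?D) $$ (a,b) = (\<Sum>l<g. ?D $$ (l,a) * ?D $$ (l,b))"
      using ab by (simp add: scalar_prod_def lessThan_atLeast0 del: sum.distrib)
    also have "\<dots> = (\<Sum>l<g. if l = a then (if a = b then s a * s a else 0) else 0)"
      by (rule sum.cong) (use ab in auto)
    also have "\<dots> = (1\<^sub>m g :: real mat) $$ (a,b)"
      using ab s[rule_format, of a] by auto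
    finally show "(transpose_mat ?D * ?D) $$ (a,b) = (1\<^sub>m g :: real mat) $$ (a,b)" .
  qed auto
  then show ?thesis
    by (simp add: real_orthogonal_def)
qed

lemma orth_act_sign_diag:
  assumes X: "set X \<subseteq> carrier_mat n n" and len: "length X = g"
  shows "orth_act (mat g g (\<lambda>(i,j). if i = j then s i else 0)) X =
    map (\<lambda>i. complex_of_real (s i) \<cdot>\<^sub>m X ! i) [0..<g]"
proof (rule nth_equalityI)
  fix i assume "i < length (orth_act (mat g g (\<lambda>(i,j). if i = j then s i else 0)) X)"
  then have i: "i < g"
    using len by simp
  have Xi: "X ! i \<in> carrier_mat n n"
    using X nth_mem[of i X] i len by auto
  have "(\<Sum>k<g. complex_of_real (mat g g (\<lambda>(i,j). if i = j then s i else 0) $$ (i,k)) * X ! k $$ (a,b)) =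
      complex_of_real (s i) * X ! i $$ (a,b)" for a b
  proof -
    have "(\<Sum>k<g. complex_of_real (mat g g (\<lambda>(i,j). if i = j then s i else 0) $$ (i,k)) * X ! k $$ (a,b)) =
        (\<Sum>k<g. if k = i then complex_of_real (s i) * X ! i $$ (a,b) else 0)"
      by (rule sum.cong) (use i in auto)
    then show ?thesis
      using i by simp
  qed
  then show "orth_act (mat g g (\<lambda>(i,j). if i = j then s i else 0)) X ! i =
      map (\<lambda>i. complex_of_real (s i) \<cdot>\<^sub>m X ! i) [0..<g] ! i"
    using Xi i len by (auto simp: nth_orth_act[OF X] intro!: eq_matI)
qed (simp add: len)

theorem mainTheorem4:
  fixes g :: nat
  assumes "g \<ge> 2"
  shows "(\<forall>U X. real_orthogonal g U \<longrightarrow> X \<in> free_spectrahedron (Fg g) \<longrightarrow>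
            orth_act U X \<in> free_spectrahedron (Fg g))
       \<and> (\<forall>X (s :: nat \<Rightarrow> real). X \<in> free_spectrahedron (Fg g) \<longrightarrow> (\<forall>i. s i = 1 \<or> s i = -1) \<longrightarrow>
            map (\<lambda>i. complex_of_real (s i) \<cdot>\<^sub>m (X ! i)) [0..<g] \<in> free_spectrahedron (Fg g))"
proof -
  obtain m where g: "g = Suc (Suc m)"
    using assms by (metis add_2_eq_Suc le_Suc_ex)
  obtain E where E: "clifford_system (2 ^ Suc m) (Fg g) E"
    using clifford_system_Fg[of m] g by blast
  have F: "set (Fg g) \<subseteq> carrier_mat (2 ^ Suc m) (2 ^ Suc m)" "Fg g \<noteq> []" "length (Fg g) = g"
    using clifford_systemD(2)[OF E] length_Fg[of m] g by auto
  have rotate: "orth_act U X \<in> free_spectrahedron (Fg g)"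
    if "real_orthogonal g U" "X \<in> free_spectrahedron (Fg g)" for U X
    using exists_unitary_lift[OF E] free_spectrahedron_orth_act[OF _ F(1,2)] that F(3) by metis
  have "map (\<lambda>i. complex_of_real (s i) \<cdot>\<^sub>m (X ! i)) [0..<g] \<in> free_spectrahedron (Fg g)"
    if X: "X \<in> free_spectrahedron (Fg g)" and s: "\<forall>i. s i = 1 \<or> s i = -1" for X and s :: "nat \<Rightarrow> real"
  proof -
    obtain n where "set X \<subseteq> carrier_mat n n" "length X = g"
      using X F(3) by (auto elim: free_spectrahedronE)
    then show ?thesis
      using rotate[OF real_orthogonal_sign_diag[OF s] X] by (simp add: orth_act_sign_diag)
  qed
  with rotate show ?thesis
    by blast
qed

end
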